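(* Let $\alpha,\beta$ be real numbers with $\beta\le 1<\alpha$. Then the $\beta$-Ces\`aro operator $C_\beta$ maps $\mathcal{B}_\alpha^0$ into $\mathcal{B}_\alpha^0$ and is a bounded linear operator from $(\mathcal{B}_\alpha^0,\|\cdot\|_{\mathcal{B}_\alpha})$ to itself.
   Context: $\mathbb{D}=\{z\in\mathbb{C}:|z|<1\}$. For $\alpha>0$, the $\alpha$-Bloch space $\mathcal{B}_\alpha$ is the space of analytic functions $f$ on $\mathbb{D}$ with $\|f\|_{\mathcal{B}_\alpha}:=\sup_{z\in\mathbb{D}}(1-|z|^2)^\alpha|f'(z)|<\infty$. $\mathcal{B}_\alpha^0=\{f\in\mathcal{B}_\alpha: f(0)=0\}$, normed by $\|\cdot\|_{\mathcal{B}_\alpha}$. For $\beta\in\mathbb{R}$, the $\beta$-Ces\`aro operator is $C_\beta(f)(z)=\int_0^z \frac{f(w)}{w(1-w)^\beta}\,dw$ for analytic $f$ on $\mathbb{D}$ with $f(0)=0$, where $(1-w)^{\beta}$ is defined by the principal branch. *)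

theory Defs
  imports "HOL-Complex_Analysis.Complex_Analysis"
begin

definition disc :: "complex set" where
  "disc = ball 0 1"

definition bloch_norm :: "real \<Rightarrow> (complex \<Rightarrow> complex) \<Rightarrow> real" where
  "bloch_norm \<alpha> f = (SUP z\<in>disc. (1 - (cmod z)\<^sup>2) powr \<alpha> * cmod (deriv f z))"

definition in_bloch :: "real \<Rightarrow> (complex \<Rightarrow> complex) \<Rightarrow> bool" where
  "in_bloch \<alpha> f \<longleftrightarrow> f holomorphic_on disc \<and>
     bdd_above ((\<lambda>z. (1 - (cmod z)\<^sup>2) powr \<alpha> * cmod (deriv f z)) ` disc)"

definition in_bloch0 :: "real \<Rightarrow> (complex \<Rightarrow> complex) \<Rightarrow> bool" where
  "in_bloch0 \<alpha> f \<longleftrightarrow> in_bloch \<alpha> f \<and> f 0 = 0"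

text \<open>At w = 0 the integrand is given its removable value f'(0) (irrelevant for the integral).\<close>
definition cesaro :: "real \<Rightarrow> (complex \<Rightarrow> complex) \<Rightarrow> complex \<Rightarrow> complex" where
  "cesaro \<beta> f z = contour_integral (linepath 0 z)
     (\<lambda>w. if w = 0 then deriv f 0 else f w / (w * (1 - w) powr (complex_of_real \<beta>)))"

end

theory Submission
  imports Defs
begin

text \<open>
  \<open>C\<^sub>\<beta> f\<close> is a primitive of \<open>f(w) / (w (1 - w)\<^sup>\<beta>)\<close>. Integrating the Bloch bound
  \<open>|f'(w)| \<le> \<parallel>f\<parallel> / (1 - |w|\<^sup>2)\<^sup>\<alpha>\<close> along the radius gives
  \<open>|f(z)| \<le> c \<parallel>f\<parallel> |z| (1 - |z|)\<^bsup>1-\<alpha>\<^esup>\<close> when \<open>\<alpha> > 1\<close> and \<open>f(0) = 0\<close>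
  (near the origin one uses \<open>|f(z)| \<le> \<parallel>f\<parallel> |z| (1 - |z|)\<^bsup>-\<alpha>\<^esup>\<close> instead), and \<open>\<beta> \<le> 1\<close> gives
  \<open>1 - |z| \<le> 2\<^bsup>|\<beta>|\<^esup> |1 - z|\<^sup>\<beta>\<close>. Hence \<open>|(C\<^sub>\<beta> f)'(z)| \<le> c' \<parallel>f\<parallel> (1 - |z|)\<^bsup>-\<alpha>\<^esup>\<close>,
  which the weight \<open>(1 - |z|\<^sup>2)\<^sup>\<alpha> \<le> 2\<^sup>\<alpha> (1 - |z|)\<^sup>\<alpha>\<close> absorbs.
\<close>

lemma mem_disc_iff: "z \<in> disc \<longleftrightarrow> cmod z < 1"
  by (simp add: disc_def)

lemma open_disc: "open disc" and convex_disc: "convex disc" and zero_in_disc: "0 \<in> disc"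
  by (simp_all add: disc_def)

lemma holomorphic_radial_bound_general:
  assumes holf: "f holomorphic_on S" and "open S" and seg: "closed_segment 0 z \<subseteq> S"
    and "continuous_on {0..1} \<phi>"
    and "\<And>t. 0 < t \<Longrightarrow> t < 1 \<Longrightarrow> (\<phi> has_real_derivative \<phi>' t) (at t)"
    and "\<And>t. 0 < t \<Longrightarrow> t < 1 \<Longrightarrow> cmod z * cmod (deriv f (of_real t * z)) \<le> \<phi>' t"
  shows "cmod (f z - f 0) \<le> \<phi> 1 - \<phi> 0"
proof -
  have on_seg: "of_real t * z \<in> S" if "t \<in> {0..1}" for t
    using that by (intro subsetD[OF seg]) (auto simp: in_segment scaleR_conv_of_real)
  have "cmod (f (of_real 1 * z) - f (of_real 0 * z)) \<le> \<phi> 1 - \<phi> 0"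
  proof (rule differentiable_bound_general[where f' = "\<lambda>t. z * deriv f (of_real t * z)"])
    show "continuous_on {0..1} (\<lambda>t. f (of_real t * z))"
      using on_seg
      by (intro continuous_on_compose2[OF holomorphic_on_imp_continuous_on[OF holf]] continuous_intros)
        auto
    fix t :: real
    assume t: "0 < t" "t < 1"
    have "(f has_field_derivative deriv f (of_real t * z)) (at (of_real t * z))"
      using holf on_seg[of t] t \<open>open S\<close> by (auto intro!: holomorphic_derivI)
    moreover have "((\<lambda>t. of_real t * z) has_vector_derivative z) (at t)"
      by (auto intro!: derivative_eq_intros simp: has_vector_derivative_def scaleR_conv_of_real)
    ultimately show "((\<lambda>t. f (of_real t * z)) has_vector_derivative z * deriv f (of_real t * z)) (at t)"
      using field_vector_diff_chain_at by (force simp: o_def)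
  qed (use assms in \<open>auto simp: norm_mult has_real_derivative_iff_has_vector_derivative\<close>)
  then show ?thesis
    by simp
qed

lemma bloch_weight_le_bloch_norm:
  assumes "in_bloch \<alpha> f" "w \<in> disc"
  shows "(1 - (cmod w)\<^sup>2) powr \<alpha> * cmod (deriv f w) \<le> bloch_norm \<alpha> f"
  using assms unfolding in_bloch_def bloch_norm_def by (auto intro: cSUP_upper)

lemma bloch_norm_nonneg: "in_bloch \<alpha> f \<Longrightarrow> 0 \<le> bloch_norm \<alpha> f"
  using bloch_weight_le_bloch_norm[OF _ zero_in_disc] by (meson mult_nonneg_nonneg norm_ge_zero order_trans powr_ge_zero)

lemma bloch_norm_le:
  assumes "\<And>w. w \<in> disc \<Longrightarrow> (1 - (cmod w)\<^sup>2) powr \<alpha> * cmod (deriv f w) \<le> M"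
  shows "bloch_norm \<alpha> f \<le> M"
  unfolding bloch_norm_def using assms zero_in_disc by (intro cSUP_least) auto

lemma bloch_deriv_radial_le:
  assumes "in_bloch \<alpha> f" "0 \<le> \<alpha>" "z \<in> disc" "0 \<le> t" "t \<le> 1"
  shows "cmod (deriv f (of_real t * z)) \<le> bloch_norm \<alpha> f * (1 - t * cmod z) powr (- \<alpha>)"
proof -
  define s where "s = t * cmod z"
  have s: "0 \<le> s" "s < 1"
    using assms(3-5) by (auto simp: s_def mem_disc_iff intro: le_less_trans[OF mult_left_le_one_le])
  have "of_real t * z \<in> disc"
    using assms(4) s by (simp add: mem_disc_iff s_def norm_mult)
  from bloch_weight_le_bloch_norm[OF assms(1) this]
  have "(1 - s\<^sup>2) powr \<alpha> * cmod (deriv f (of_real t * z)) \<le> bloch_norm \<alpha> f"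
    using assms(4) by (simp add: s_def norm_mult)
  moreover have "(1 - s) powr \<alpha> \<le> (1 - s\<^sup>2) powr \<alpha>"
    using s assms(2) by (intro powr_mono2) (auto simp: power2_eq_square mult_left_le_one_le)
  ultimately have "(1 - s) powr \<alpha> * cmod (deriv f (of_real t * z)) \<le> bloch_norm \<alpha> f"
    by (meson mult_right_mono norm_ge_zero order_trans)
  then show ?thesis
    using s by (simp add: s_def powr_minus divide_simps mult.commute)
qed

lemma bloch_growth_small:
  assumes f: "in_bloch \<alpha> f" and "0 \<le> \<alpha>" and z: "z \<in> disc"
  shows "cmod (f z - f 0) \<le> bloch_norm \<alpha> f * cmod z * (1 - cmod z) powr (- \<alpha>)"
proof -
  define c where "c = bloch_norm \<alpha> f * cmod z * (1 - cmod z) powr (- \<alpha>)"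
  have "cmod (f z - f 0) \<le> 1 * c - 0 * c"
  proof (rule holomorphic_radial_bound_general[where \<phi>' = "\<lambda>_. c"])
    show "f holomorphic_on disc"
      using f by (simp add: in_bloch_def)
    show "closed_segment 0 z \<subseteq> disc"
      using z by (simp add: closed_segment_subset convex_disc zero_in_disc)
    fix t :: real
    assume t: "0 < t" "t < 1"
    have "(1 - t * cmod z) powr (- \<alpha>) \<le> (1 - cmod z) powr (- \<alpha>)"
      using t z \<open>0 \<le> \<alpha>\<close> by (intro powr_mono2') (auto simp: mem_disc_iff mult_left_le_one_le)
    then have "cmod (deriv f (of_real t * z)) \<le> bloch_norm \<alpha> f * (1 - cmod z) powr (- \<alpha>)"
      using bloch_deriv_radial_le[OF f \<open>0 \<le> \<alpha>\<close> z, of t] t bloch_norm_nonneg[OF f]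
      by (meson less_imp_le mult_left_mono order_trans)
    then show "cmod z * cmod (deriv f (of_real t * z)) \<le> c"
      unfolding c_def by (metis mult.assoc mult.left_commute mult_left_mono norm_ge_zero)
  qed (auto simp: open_disc intro!: derivative_eq_intros continuous_on_mult_right continuous_on_id)
  then show ?thesis
    by (simp add: c_def)
qed

lemma bloch_growth_large:
  assumes f: "in_bloch \<alpha> f" and "1 < \<alpha>" and z: "z \<in> disc"
  shows "cmod (f z - f 0) \<le> bloch_norm \<alpha> f * (1 - cmod z) powr (1 - \<alpha>) / (\<alpha> - 1)"
proof -
  define M where "M = bloch_norm \<alpha> f"
  define r where "r = cmod z"
  have r: "0 \<le> r" "r < 1"
    using z by (auto simp: r_def mem_disc_iff)
  have pos: "0 < 1 - t * r" if "0 \<le> t" "t \<le> 1" for t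
    using r that mult_left_le_one_le[of r t] by linarith
  define \<phi> where "\<phi> t = M * (1 - t * r) powr (1 - \<alpha>) / (\<alpha> - 1)" for t
  have "cmod (f z - f 0) \<le> \<phi> 1 - \<phi> 0"
  proof (rule holomorphic_radial_bound_general[where \<phi>' = "\<lambda>t. M * r * (1 - t * r) powr (- \<alpha>)"])
    show "f holomorphic_on disc"
      using f by (simp add: in_bloch_def)
    show "closed_segment 0 z \<subseteq> disc"
      using z by (simp add: closed_segment_subset convex_disc zero_in_disc)
    show "continuous_on {0..1} \<phi>"
    proof -
      have "\<forall>t\<in>{0..1}. 1 - t * r \<noteq> 0"
        using pos by fastforce
      then show ?thesis
        unfolding \<phi>_def using \<open>1 < \<alpha>\<close> by (intro continuous_intros) auto
    qed
    fix t :: real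
    assume t: "0 < t" "t < 1"
    have "((\<lambda>t. (1 - t * r) powr (1 - \<alpha>)) has_real_derivative
        (1 - \<alpha>) * (1 - t * r) powr (1 - \<alpha> - 1) * (- r)) (at t)"
      using pos[of t] t by (auto intro!: derivative_eq_intros)
    then have "(\<phi> has_real_derivative M * ((1 - \<alpha>) * (1 - t * r) powr (1 - \<alpha> - 1) * (- r)) / (\<alpha> - 1)) (at t)"
      unfolding \<phi>_def by (intro DERIV_cdivide DERIV_cmult)
    moreover have "M * ((1 - \<alpha>) * (1 - t * r) powr (1 - \<alpha> - 1) * (- r)) / (\<alpha> - 1) = M * r * (1 - t * r) powr (- \<alpha>)"
      using \<open>1 < \<alpha>\<close> by (simp add: field_simps)
    ultimately show "(\<phi> has_real_derivative M * r * (1 - t * r) powr (- \<alpha>)) (at t)"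
      by simp
    have "cmod (deriv f (of_real t * z)) \<le> M * (1 - t * r) powr (- \<alpha>)"
      using bloch_deriv_radial_le[OF f _ z, of t] t \<open>1 < \<alpha>\<close> by (simp add: M_def r_def)
    then show "cmod z * cmod (deriv f (of_real t * z)) \<le> M * r * (1 - t * r) powr (- \<alpha>)"
      using mult_left_mono[of _ _ r] r unfolding r_def by (metis mult.assoc mult.left_commute)
  qed (simp add: open_disc)
  also have "\<dots> \<le> \<phi> 1"
    using bloch_norm_nonneg[OF f] \<open>1 < \<alpha>\<close> by (simp add: \<phi>_def M_def)
  finally show ?thesis
    by (simp add: \<phi>_def M_def r_def)
qed

lemma bloch_growth:
  assumes f: "in_bloch \<alpha> f" and "1 < \<alpha>" and z: "z \<in> disc"
  shows "cmod (f z - f 0)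
    \<le> 2 * max 1 (1 / (\<alpha> - 1)) * bloch_norm \<alpha> f * cmod z * (1 - cmod z) powr (1 - \<alpha>)"
proof -
  define r where "r = cmod z"
  define K where "K = 2 * max 1 (1 / (\<alpha> - 1))"
  define P where "P = bloch_norm \<alpha> f * (1 - r) powr (1 - \<alpha>)"
  have r: "0 \<le> r" "r < 1"
    using z by (auto simp: r_def mem_disc_iff)
  have "0 \<le> P"
    using bloch_norm_nonneg[OF f] by (simp add: P_def)
  then have "0 \<le> r * P"
    using r by simp
  have K: "2 \<le> K" "2 / (\<alpha> - 1) \<le> K"
    by (auto simp: K_def)
  have "cmod (f z - f 0) \<le> K * r * P"
  proof (cases "r \<le> 1 / 2")
    case True
    have "(1 - r) powr (1 - \<alpha>) = (1 - r) * (1 - r) powr (- \<alpha>)"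
      using powr_add[of "1 - r" 1 "- \<alpha>"] r by simp
    then have "cmod (f z - f 0) \<le> r * P / (1 - r)"
      using bloch_growth_small[OF f _ z] \<open>1 < \<alpha>\<close> r by (simp add: P_def r_def mult_ac)
    also have "\<dots> = r * P * (1 / (1 - r))"
      by simp
    also have "\<dots> \<le> r * P * 2"
      using True \<open>0 \<le> r * P\<close> by (intro mult_left_mono) (auto simp: field_simps)
    also have "\<dots> \<le> K * r * P"
      using mult_right_mono[OF K(1) \<open>0 \<le> r * P\<close>] by (simp add: mult_ac)
    finally show ?thesis .
  next
    case False
    have "cmod (f z - f 0) \<le> P / (\<alpha> - 1)"
      using bloch_growth_large[OF f \<open>1 < \<alpha>\<close> z] by (simp add: P_def r_def)
    also have "\<dots> \<le> (2 * r) * P / (\<alpha> - 1)"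
      using False \<open>1 < \<alpha>\<close> mult_right_mono[of 1 "2 * r" P] \<open>0 \<le> P\<close>
      by (intro divide_right_mono) auto
    also have "\<dots> = 2 / (\<alpha> - 1) * (r * P)"
      by simp
    also have "\<dots> \<le> K * r * P"
      using mult_right_mono[OF K(2) \<open>0 \<le> r * P\<close>] by (simp add: mult_ac)
    finally show ?thesis .
  qed
  then show ?thesis
    by (simp add: K_def P_def r_def mult_ac)
qed

definition cesaro_kernel :: "real \<Rightarrow> (complex \<Rightarrow> complex) \<Rightarrow> complex \<Rightarrow> complex" where
  "cesaro_kernel \<beta> f w = (if w = 0 then deriv f 0 else f w / w) / (1 - w) powr of_real \<beta>"

lemma cesaro_eq_contour_integral_kernel:
  "cesaro \<beta> f z = contour_integral (linepath 0 z) (cesaro_kernel \<beta> f)"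
  unfolding cesaro_def cesaro_kernel_def by (rule arg_cong[where f = "contour_integral _"]) auto

lemma holomorphic_on_cesaro_kernel:
  assumes holf: "f holomorphic_on disc" and "f 0 = 0"
  shows "cesaro_kernel \<beta> f holomorphic_on disc"
proof -
  have "(\<lambda>w. if w = 0 then deriv f 0 else (f w - f 0) / (w - 0)) holomorphic_on disc"
    by (rule pole_lemma[OF holf]) (simp_all add: interior_open open_disc zero_in_disc)
  moreover have "(\<lambda>w. if w = 0 then deriv f 0 else (f w - f 0) / (w - 0))
      = (\<lambda>w. if w = 0 then deriv f 0 else f w / w)"
    using \<open>f 0 = 0\<close> by (simp add: fun_eq_iff)
  ultimately have quotient: "(\<lambda>w. if w = 0 then deriv f 0 else f w / w) holomorphic_on disc"
    by simp
  have Re_pos: "0 < Re (1 - w)" if "w \<in> disc" for w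
    using that complex_Re_le_cmod[of w] by (simp add: mem_disc_iff)
  have "(\<lambda>w. (1 - w) powr of_real \<beta>) holomorphic_on disc"
    by (intro holomorphic_on_powr) (auto intro!: holomorphic_intros dest!: Re_pos simp: nonpos_Reals_def)
  with quotient show ?thesis
    unfolding cesaro_kernel_def[abs_def]
    by (rule holomorphic_on_divide) (auto simp: mem_disc_iff)
qed

lemma cesaro_has_field_derivative:
  assumes "f holomorphic_on disc" "f 0 = 0" "z \<in> disc"
  shows "(cesaro \<beta> f has_field_derivative cesaro_kernel \<beta> f z) (at z)"
proof -
  obtain h where h: "\<And>w. w \<in> disc \<Longrightarrow> (h has_field_derivative cesaro_kernel \<beta> f w) (at w within disc)"
    using holomorphic_convex_primitive'[OF convex_disc open_disc holomorphic_on_cesaro_kernel[OF assms(1,2)]]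
    by blast
  have primitive: "cesaro \<beta> f w = h w - h 0" if "w \<in> disc" for w
  proof -
    have "path_image (linepath 0 w) \<subseteq> disc"
      using that by (simp add: closed_segment_subset convex_disc zero_in_disc)
    from contour_integral_primitive[OF h valid_path_linepath this]
    show ?thesis
      by (simp add: cesaro_eq_contour_integral_kernel contour_integral_unique)
  qed
  have "((\<lambda>w. h w - h 0) has_field_derivative cesaro_kernel \<beta> f z) (at z)"
    using h[OF assms(3)] at_within_open[OF assms(3) open_disc] by (auto intro!: derivative_eq_intros)
  then show ?thesis
    by (rule has_field_derivative_transform_within_open[OF _ open_disc assms(3)]) (simp add: primitive)
qed

lemma cesaro_linear:
  assumes f: "f holomorphic_on disc" "f 0 = 0" and g: "g holomorphic_on disc" "g 0 = 0"
    and z: "z \<in> disc"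
  shows "cesaro \<beta> (\<lambda>w. a * f w + b * g w) z = a * cesaro \<beta> f z + b * cesaro \<beta> g z"
proof -
  have "f field_differentiable at 0" "g field_differentiable at 0"
    using f g by (auto intro: holomorphic_on_imp_differentiable_at simp: open_disc zero_in_disc)
  then have "deriv (\<lambda>w. a * f w + b * g w) 0 = a * deriv f 0 + b * deriv g 0"
    by (simp add: field_differentiable_mult)
  then have kernel: "cesaro_kernel \<beta> (\<lambda>w. a * f w + b * g w)
      = (\<lambda>w. a * cesaro_kernel \<beta> f w + b * cesaro_kernel \<beta> g w)"
    by (auto simp: cesaro_kernel_def add_divide_distrib)
  have "closed_segment 0 z \<subseteq> disc"
    using z by (simp add: closed_segment_subset convex_disc zero_in_disc)
  then have "cesaro_kernel \<beta> f contour_integrable_on linepath 0 z"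
    "cesaro_kernel \<beta> g contour_integrable_on linepath 0 z"
    using holomorphic_on_cesaro_kernel[OF f] holomorphic_on_cesaro_kernel[OF g]
    by (meson contour_integrable_continuous_linepath continuous_on_subset
        holomorphic_on_imp_continuous_on)+
  then show ?thesis
    unfolding cesaro_eq_contour_integral_kernel kernel
    by (simp add: contour_integral_add contour_integral_lmul contour_integrable_lmul)
qed

lemma one_minus_norm_le_norm_one_minus_powr:
  fixes z :: complex
  assumes "cmod z < 1" and "\<beta> \<le> 1"
  shows "1 - cmod z \<le> 2 powr \<bar>\<beta>\<bar> * cmod (1 - z) powr \<beta>"
proof (cases "0 \<le> \<beta>")
  case True
  have "1 - cmod z \<le> (1 - cmod z) powr \<beta>"
    using assms True powr_mono'[of \<beta> 1 "1 - cmod z"] by simp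
  also have "\<dots> \<le> cmod (1 - z) powr \<beta>"
    using assms True norm_triangle_ineq2[of 1 z] by (intro powr_mono2) auto
  also have "\<dots> \<le> 2 powr \<bar>\<beta>\<bar> * cmod (1 - z) powr \<beta>"
    by (simp add: mult_le_cancel_right1 ge_one_powr_ge_zero)
  finally show ?thesis .
next
  case False
  have "0 < cmod (1 - z)"
    using assms by auto
  moreover have "cmod (1 - z) \<le> 2"
    using assms norm_triangle_ineq4[of 1 z] by simp
  ultimately have "2 powr \<beta> \<le> cmod (1 - z) powr \<beta>"
    using False by (intro powr_mono2') auto
  then have "1 \<le> 2 powr \<bar>\<beta>\<bar> * cmod (1 - z) powr \<beta>"
    using False by (simp add: powr_minus divide_simps)
  then show ?thesis
    by (smt (verit) norm_ge_zero)
qed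

lemma norm_cesaro_kernel_le:
  assumes f: "in_bloch \<alpha> f" "f 0 = 0" and "1 < \<alpha>" "\<beta> \<le> 1" and z: "z \<in> disc"
  shows "cmod (cesaro_kernel \<beta> f z)
    \<le> 2 powr \<bar>\<beta>\<bar> * (2 * max 1 (1 / (\<alpha> - 1))) * bloch_norm \<alpha> f * (1 - cmod z) powr (- \<alpha>)"
proof -
  define B where "B = 2 powr \<bar>\<beta>\<bar>"
  define K where "K = 2 * max 1 (1 / (\<alpha> - 1))"
  define M where "M = bloch_norm \<alpha> f"
  define r where "r = cmod z"
  have r: "0 \<le> r" "r < 1"
    using z by (auto simp: r_def mem_disc_iff)
  have "0 \<le> M"
    using bloch_norm_nonneg[OF f(1)] by (simp add: M_def)
  have "1 \<le> B" "2 \<le> K"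
    by (auto simp: B_def K_def ge_one_powr_ge_zero)
  show ?thesis
  proof (cases "z = 0")
    case True
    have "cmod (deriv f 0) \<le> M"
      using bloch_weight_le_bloch_norm[OF f(1) zero_in_disc] by (simp add: M_def)
    also have "M \<le> B * K * M"
      using \<open>0 \<le> M\<close> \<open>1 \<le> B\<close> \<open>2 \<le> K\<close> mult_mono[of 1 B 1 K]
      by (simp add: mult_le_cancel_right1)
    finally show ?thesis
      using True by (simp add: cesaro_kernel_def B_def K_def M_def)
  next
    case False
    define E where "E = cmod (1 - z) powr \<beta>"
    have "0 < r" "0 < E"
      using False r z by (auto simp: r_def E_def mem_disc_iff)
    have "cmod (cesaro_kernel \<beta> f z) = cmod (f z) / r * (1 / E)"
      using False by (simp add: cesaro_kernel_def norm_divide norm_mult norm_powr_real_powr' r_def E_def)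
    also have "\<dots> \<le> K * M * (1 - r) powr (1 - \<alpha>) * (B / (1 - r))"
    proof (rule mult_mono)
      show "cmod (f z) / r \<le> K * M * (1 - r) powr (1 - \<alpha>)"
        using bloch_growth[OF f(1) \<open>1 < \<alpha>\<close> z] f(2) \<open>0 < r\<close>
        by (simp add: K_def M_def r_def divide_simps mult_ac)
      show "1 / E \<le> B / (1 - r)"
        using one_minus_norm_le_norm_one_minus_powr[of z \<beta>] \<open>\<beta> \<le> 1\<close> \<open>0 < E\<close> r
        by (simp add: B_def E_def r_def divide_simps mult_ac)
    qed (use \<open>0 \<le> M\<close> \<open>2 \<le> K\<close> \<open>0 < E\<close> in auto)
    also have "\<dots> = B * K * M * ((1 - r) powr (1 - \<alpha>) / (1 - r))"
      by simp
    also have "(1 - r) powr (1 - \<alpha>) / (1 - r) = (1 - r) powr (- \<alpha>)"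
      using r by (simp add: powr_diff powr_minus_divide)
    finally show ?thesis
      by (simp add: B_def K_def M_def r_def)
  qed
qed

lemma bloch_weight_deriv_cesaro_le:
  assumes f: "in_bloch0 \<alpha> f" and "1 < \<alpha>" "\<beta> \<le> 1" and z: "z \<in> disc"
  shows "(1 - (cmod z)\<^sup>2) powr \<alpha> * cmod (deriv (cesaro \<beta> f) z)
    \<le> 2 powr (\<alpha> + \<bar>\<beta>\<bar>) * (2 * max 1 (1 / (\<alpha> - 1))) * bloch_norm \<alpha> f"
proof -
  define C where "C = 2 powr \<bar>\<beta>\<bar> * (2 * max 1 (1 / (\<alpha> - 1))) * bloch_norm \<alpha> f"
  define r where "r = cmod z"
  have r: "0 \<le> r" "r < 1"
    using z by (auto simp: r_def mem_disc_iff)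
  have holf: "f holomorphic_on disc" and fb: "in_bloch \<alpha> f" and "f 0 = 0"
    using f by (auto simp: in_bloch0_def in_bloch_def)
  have "deriv (cesaro \<beta> f) z = cesaro_kernel \<beta> f z"
    using cesaro_has_field_derivative[OF holf \<open>f 0 = 0\<close> z] by (rule DERIV_imp_deriv)
  then have kernel: "cmod (deriv (cesaro \<beta> f) z) \<le> C * (1 - r) powr (- \<alpha>)"
    using norm_cesaro_kernel_le[OF fb \<open>f 0 = 0\<close> \<open>1 < \<alpha>\<close> \<open>\<beta> \<le> 1\<close> z] by (simp add: C_def r_def)
  have "(1 - r\<^sup>2) powr \<alpha> = (1 + r) powr \<alpha> * (1 - r) powr \<alpha>"
    using r by (simp add: power2_eq_square algebra_simps flip: powr_mult)
  also have "\<dots> \<le> 2 powr \<alpha> * (1 - r) powr \<alpha>"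
    using r \<open>1 < \<alpha>\<close> by (intro mult_right_mono powr_mono2) auto
  finally have weight: "(1 - r\<^sup>2) powr \<alpha> \<le> 2 powr \<alpha> * (1 - r) powr \<alpha>" .
  have "(1 - r\<^sup>2) powr \<alpha> * cmod (deriv (cesaro \<beta> f) z)
      \<le> 2 powr \<alpha> * (1 - r) powr \<alpha> * (C * (1 - r) powr (- \<alpha>))"
    using weight kernel by (intro mult_mono) auto
  also have "\<dots> = 2 powr \<alpha> * C"
    using r by (simp add: powr_minus field_simps)
  finally show ?thesis
    by (simp add: C_def r_def powr_add mult_ac)
qed

lemma in_bloch0_cesaro:
  assumes f: "in_bloch0 \<alpha> f" and "1 < \<alpha>" "\<beta> \<le> 1"
  shows "in_bloch0 \<alpha> (cesaro \<beta> f)"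
proof -
  have "f holomorphic_on disc" "f 0 = 0"
    using f by (auto simp: in_bloch0_def in_bloch_def)
  from cesaro_has_field_derivative[OF this]
  have "cesaro \<beta> f holomorphic_on disc"
    using open_disc by (auto simp: holomorphic_on_open)
  moreover have "bdd_above ((\<lambda>z. (1 - (cmod z)\<^sup>2) powr \<alpha> * cmod (deriv (cesaro \<beta> f) z)) ` disc)"
    using bloch_weight_deriv_cesaro_le[OF assms] by (intro bdd_aboveI2) auto
  ultimately show ?thesis
    by (simp add: in_bloch0_def in_bloch_def cesaro_def)
qed

lemma bloch_norm_cesaro_le:
  assumes "in_bloch0 \<alpha> f" and "1 < \<alpha>" "\<beta> \<le> 1"
  shows "bloch_norm \<alpha> (cesaro \<beta> f)
    \<le> 2 powr (\<alpha> + \<bar>\<beta>\<bar>) * (2 * max 1 (1 / (\<alpha> - 1))) * bloch_norm \<alpha> f"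
  using bloch_weight_deriv_cesaro_le[OF assms] by (rule bloch_norm_le)

theorem theorem2p3:
  fixes \<alpha> \<beta> :: real
  assumes "\<beta> \<le> 1" and "1 < \<alpha>"
  shows "(\<forall>f. in_bloch0 \<alpha> f \<longrightarrow> in_bloch0 \<alpha> (cesaro \<beta> f))
    \<and> (\<forall>f g a b. in_bloch0 \<alpha> f \<longrightarrow> in_bloch0 \<alpha> g \<longrightarrow>
          (\<forall>z\<in>disc. cesaro \<beta> (\<lambda>w. a * f w + b * g w) z = a * cesaro \<beta> f z + b * cesaro \<beta> g z))
    \<and> (\<exists>C. \<forall>f. in_bloch0 \<alpha> f \<longrightarrow> bloch_norm \<alpha> (cesaro \<beta> f) \<le> C * bloch_norm \<alpha> f)"
  using in_bloch0_cesaro[OF _ assms(2,1)] bloch_norm_cesaro_le[OF _ assms(2,1)]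
  by (auto simp: in_bloch0_def in_bloch_def intro: cesaro_linear)

end
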